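(* Let $0<m<1$, $\mu>0$, $f$ smooth, $u_->u_+=0$, $s=\frac{f(u_+)-f(u_-)}{u_+-u_-}$ with $f'(u_+)<s<f'(u_-)$, and let $U$ be a monotonically decreasing viscous shock profile, i.e. $-sU'+f(U)'=\mu(U^m)''$ with $U(-\infty)=u_-$, $U(+\infty)=u_+$. Then there is a constant $C>0$ such that for all $\xi\in\mathbb{R}$, $$|U_\xi(\xi)|\le CU(\xi)^{2-m},\qquad |U_{\xi\xi}(\xi)|\le CU(\xi)^{3-2m}.$$ *)

theory Defs
  imports "HOL-Analysis.Analysis"
begin

definition smooth_fun :: "(real \<Rightarrow> real) \<Rightarrow> bool" where
  "smooth_fun f \<longleftrightarrow> (\<forall>k x. ((deriv ^^ k) f) differentiable (at x))"

end

theory Submission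
  imports Defs
begin

text \<open>Integrating the profile equation once from \<open>+\<infinity>\<close>, where \<open>U \<rightarrow> 0\<close>, gives
  \<open>\<mu> (U^m)' = h(U)\<close> with \<open>h(u) = f(u) - f(0) - s u\<close>; as \<open>h(0) = 0\<close> and \<open>f\<close> is \<open>C^1\<close>,
  \<open>|h(u)| \<le> A u\<close> on \<open>[0, u_-]\<close>. Where \<open>U > 0\<close> this is the autonomous equation
  \<open>U' = k h(U) U^(1-m)\<close> with \<open>k = 1/(m \<mu>)\<close>, which gives \<open>|U'| \<le> k A U^(2-m)\<close> and, differentiated
  once more, \<open>|U''| \<le> 2 (k A)^2 U^(3-2m)\<close>. Where \<open>U = 0\<close>, the decreasing profile stays \<open>0\<close>
  to the right, so \<open>U'\<close> and \<open>U''\<close> vanish. Neither the Lax inequalities nor the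
  Rankine-Hugoniot value of \<open>s\<close> is needed.\<close>

lemma smooth_fun_imp_C1:
  assumes "smooth_fun f"
  shows "(f has_real_derivative deriv f x) (at x)" and "isCont (deriv f) x"
proof -
  have "((deriv ^^ 0) f) differentiable (at x)" "((deriv ^^ 1) f) differentiable (at x)"
    using assms unfolding smooth_fun_def by blast+
  then show "(f has_real_derivative deriv f x) (at x)" "isCont (deriv f) x"
    by (simp_all add: DERIV_deriv_iff_real_differentiable differentiable_imp_continuous_within)
qed

lemma DERIV_tendsto_at_top_imp_zero:
  fixes F F' :: "real \<Rightarrow> real"
  assumes F: "\<And>x. (F has_real_derivative F' x) (at x)"
    and F_lim: "(F \<longlongrightarrow> c) at_top" and F'_lim: "(F' \<longlongrightarrow> L) at_top"
  shows "L = 0"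
proof (rule ccontr)
  assume "L \<noteq> 0"
  then have e: "\<bar>L\<bar> / 4 > 0" by simp
  have "eventually (\<lambda>y. dist (F' y) L < \<bar>L\<bar> / 4 \<and> dist (F y) c < \<bar>L\<bar> / 4) at_top"
    using tendstoD[OF F'_lim e] tendstoD[OF F_lim e] by (rule eventually_conj)
  then obtain X where X: "\<And>y. y \<ge> X \<Longrightarrow> \<bar>F' y - L\<bar> < \<bar>L\<bar> / 4 \<and> \<bar>F y - c\<bar> < \<bar>L\<bar> / 4"
    unfolding eventually_at_top_linorder dist_real_def by blast
  obtain z where z: "X < z" "F (X + 1) - F X = F' z"
    using MVT2[of X "X + 1" F F'] F by auto
  have "\<bar>F' z - L\<bar> < \<bar>L\<bar> / 4" "\<bar>F (X + 1) - c\<bar> < \<bar>L\<bar> / 4" "\<bar>F X - c\<bar> < \<bar>L\<bar> / 4"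
    using X[of z] X[of X] X[of "X + 1"] z(1) by simp_all
  with z(2) show False by linarith
qed

lemma antimono_tendsto_at_top_le:
  fixes U :: "'a::linorder \<Rightarrow> 'b::linorder_topology"
  assumes "antimono U" "(U \<longlongrightarrow> a) at_top"
  shows "a \<le> U x"
proof (rule tendsto_upperbound[OF assms(2) _ trivial_limit_at_top_linorder])
  show "eventually (\<lambda>y. U y \<le> U x) at_top"
    unfolding eventually_at_top_linorder using antimonoD[OF assms(1)] by blast
qed

lemma antimono_le_tendsto_at_bot:
  fixes U :: "'a::linorder \<Rightarrow> 'b::linorder_topology"
  assumes "antimono U" "(U \<longlongrightarrow> b) at_bot"
  shows "U x \<le> b"
proof (rule tendsto_lowerbound[OF assms(2) _ trivial_limit_at_bot_linorder])
  show "eventually (\<lambda>y. U x \<le> U y) at_bot"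
    unfolding eventually_at_bot_linorder using antimonoD[OF assms(1)] by blast
qed

text \<open>The flux \<open>-s U + f(U) - \<mu> P'\<close> is constant; its value is read off at \<open>+\<infinity>\<close>,
  where \<open>P'\<close> must tend to \<open>0\<close> because \<open>P\<close> converges.\<close>
lemma viscous_profile_first_integral:
  fixes f f' U U' P P' P'' :: "real \<Rightarrow> real"
  assumes f: "\<And>u. (f has_real_derivative f' u) (at u)"
    and U: "\<And>x. (U has_real_derivative U' x) (at x)"
    and P: "\<And>x. (P has_real_derivative P' x) (at x)"
    and P': "\<And>x. (P' has_real_derivative P'' x) (at x)"
    and ode: "\<And>x. - s * U' x + f' (U x) * U' x = mu * P'' x"
    and U_lim: "(U \<longlongrightarrow> a) at_top" and P_lim: "(P \<longlongrightarrow> c) at_top"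
  shows "mu * P' x = f (U x) - f a - s * (U x - a)"
proof -
  define G where "G y = - s * U y + f (U y) - mu * P' y" for y
  have "(G has_real_derivative 0) (at y)" for y
  proof -
    have "(G has_real_derivative - s * U' y + f' (U y) * U' y - mu * P'' y) (at y)"
      unfolding G_def by (intro derivative_intros DERIV_cmult U P' DERIV_chain2[OF f U])
    then show ?thesis using ode[of y] by simp
  qed
  then have G_const: "G y = G x" for y
    using DERIV_isconst_all by blast
  have flux: "mu * P' y = - s * U y + f (U y) - G x" for y
    using G_const[of y] unfolding G_def by simp
  have "((\<lambda>y. - s * U y + f (U y) - G x) \<longlongrightarrow> - s * a + f a - G x) at_top"
    by (intro tendsto_intros U_lim isCont_tendsto_compose[OF DERIV_isCont[OF f]])
  then have flux_lim: "((\<lambda>y. mu * P' y) \<longlongrightarrow> - s * a + f a - G x) at_top"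
    by (simp add: flux)
  have "((\<lambda>y. mu * P y) has_real_derivative mu * P' y) (at y)" for y
    by (intro DERIV_cmult P)
  from DERIV_tendsto_at_top_imp_zero[OF this tendsto_mult_left[OF P_lim] flux_lim]
  have "- s * a + f a - G x = 0" .
  then show ?thesis
    using flux[of x] by (simp add: algebra_simps)
qed

lemma DERIV_vanishing_to_the_right:
  fixes F :: "real \<Rightarrow> real"
  assumes F: "(F has_real_derivative D) (at x)" and zero: "\<And>y. x \<le> y \<Longrightarrow> F y = 0"
  shows "D = 0"
proof -
  have "(F has_real_derivative D) (at x within {x..})"
    using F by (rule has_field_derivative_at_within)
  moreover have "(F has_real_derivative 0) (at x within {x..})"
    using zero by (intro has_field_derivative_transform_within[OF DERIV_const, of 1]) auto
  ultimately show "D = 0"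
    by (rule has_field_derivative_unique) (simp add: at_within_Ici_at_right)
qed

lemma antimono_nonneg_zero_derivatives:
  fixes U U' :: "real \<Rightarrow> real" and U'' :: real
  assumes "antimono U" and nonneg: "\<And>y. 0 \<le> U y" and zero: "U x = 0"
    and U: "\<And>y. (U has_real_derivative U' y) (at y)"
    and U': "(U' has_real_derivative U'') (at x)"
  shows "U' x = 0" and "U'' = 0"
proof -
  have U'_zero: "U' y = 0" if "x \<le> y" for y
  proof -
    have "U y = 0"
      using antimonoD[OF assms(1) that] nonneg[of y] zero by simp
    then show ?thesis
      using DERIV_local_min[OF U zero_less_one] nonneg by simp
  qed
  then show "U' x = 0" by simp
  show "U'' = 0"
    using DERIV_vanishing_to_the_right[OF U' U'_zero] .
qed

lemma DERIV_autonomous_on_open: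
  fixes U U' g :: "real \<Rightarrow> real"
  assumes "open S" "\<And>y. isCont U y" "U x \<in> S"
    and eq: "\<And>y. U y \<in> S \<Longrightarrow> U' y = g (U y)"
    and U: "(U has_real_derivative U' x) (at x)"
    and g: "(g has_real_derivative g') (at (U x))"
  shows "(U' has_real_derivative g' * U' x) (at x)"
proof (rule has_field_derivative_transform_within_open)
  show "((\<lambda>y. g (U y)) has_real_derivative g' * U' x) (at x)"
    using DERIV_chain2[OF g U] .
  show "open (U -` S)"
    using assms(1,2) by (rule continuous_open_vimage)
qed (use assms(3) eq in auto)

lemma autonomous_powr_estimates:
  fixes h h' U U' :: "real \<Rightarrow> real" and U'' :: real
  assumes m: "0 \<le> m" "m \<le> 1" and k: "0 < k"
    and h: "\<And>v. 0 < v \<Longrightarrow> (h has_real_derivative h' v) (at v)"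
    and h_bound: "\<And>v. 0 < v \<Longrightarrow> v \<le> b \<Longrightarrow> \<bar>h v\<bar> \<le> A * v"
    and h'_bound: "\<And>v. 0 < v \<Longrightarrow> v \<le> b \<Longrightarrow> \<bar>h' v\<bar> \<le> A"
    and U: "\<And>y. isCont U y" "(U has_real_derivative U' x) (at x)"
    and U': "(U' has_real_derivative U'') (at x)"
    and eq: "\<And>y. 0 < U y \<Longrightarrow> U' y = k * (h (U y) * U y powr (1 - m))"
    and x: "0 < U x" "U x \<le> b"
  shows "\<bar>U' x\<bar> \<le> k * A * U x powr (2 - m)"
    and "\<bar>U''\<bar> \<le> 2 * (k * A)\<^sup>2 * U x powr (3 - 2 * m)"
proof -
  define u where "u = U x"
  have u: "0 < u" "u \<le> b" using x by (simp_all add: u_def)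
  have hu: "\<bar>h u\<bar> \<le> A * u" and h'u: "\<bar>h' u\<bar> \<le> A"
    using h_bound h'_bound u by auto
  then have A: "0 \<le> A" by linarith
  have powr_2m: "u * u powr (1 - m) = u powr (2 - m)"
    and powr_1m: "u * u powr (- m) = u powr (1 - m)"
    and powr_32m: "u powr (1 - m) * u powr (2 - m) = u powr (3 - 2 * m)"
    using u by (simp_all add: powr_mult_base powr_add[symmetric])
  have "\<bar>U' x\<bar> = k * (\<bar>h u\<bar> * u powr (1 - m))"
    using eq x k by (simp add: u_def abs_mult)
  also have "\<dots> \<le> k * (A * u * u powr (1 - m))"
    using hu k by (intro mult_left_mono mult_right_mono) auto
  finally show U'_bound: "\<bar>U' x\<bar> \<le> k * A * U x powr (2 - m)"
    using powr_2m by (simp add: u_def mult_ac)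
  define g' where "g' = h' u * u powr (1 - m) + (1 - m) * u powr (- m) * h u"
  have "\<bar>g'\<bar> \<le> A * u powr (1 - m) + (1 - m) * u powr (- m) * (A * u)"
    unfolding g'_def using h'u hu m
    by (intro abs_triangle_ineq[THEN order_trans] add_mono)
       (auto simp: abs_mult intro!: mult_right_mono mult_left_mono)
  also have "\<dots> = (2 - m) * A * u powr (1 - m)"
    using powr_1m by (simp add: algebra_simps)
  also have "\<dots> \<le> 2 * A * u powr (1 - m)"
    using m A by (intro mult_right_mono) auto
  finally have g'_bound: "\<bar>g'\<bar> \<le> 2 * A * u powr (1 - m)" .
  have "((\<lambda>v. k * (h v * v powr (1 - m))) has_real_derivative k * g') (at u)"
    unfolding g'_def using u
    by (auto intro!: derivative_eq_intros h has_real_derivative_powr simp: algebra_simps)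
  then have "(U' has_real_derivative k * g' * U' x) (at x)"
    using eq x U by (intro DERIV_autonomous_on_open[where S = "{0<..}"]) (auto simp: u_def)
  then have "\<bar>U''\<bar> = k * \<bar>g'\<bar> * \<bar>U' x\<bar>"
    using DERIV_unique[OF U'] k by (simp add: abs_mult)
  also have "\<dots> \<le> k * (2 * A * u powr (1 - m)) * (k * A * u powr (2 - m))"
    using g'_bound U'_bound k by (intro mult_mono mult_left_mono) (auto simp: u_def)
  also have "\<dots> = 2 * (k * A)\<^sup>2 * U x powr (3 - 2 * m)"
    using powr_32m by (simp add: u_def power2_eq_square algebra_simps)
  finally show "\<bar>U''\<bar> \<le> 2 * (k * A)\<^sup>2 * U x powr (3 - 2 * m)" .
qed

lemma C1_deviation_from_line_bounds:
  fixes f f' :: "real \<Rightarrow> real"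
  assumes f: "\<And>u. (f has_real_derivative f' u) (at u)" and f'_cont: "continuous_on {0..b} f'"
  obtains A where "0 < A"
    and "\<And>v. 0 \<le> v \<Longrightarrow> v \<le> b \<Longrightarrow> \<bar>f' v - s\<bar> \<le> A"
    and "\<And>v. 0 \<le> v \<Longrightarrow> v \<le> b \<Longrightarrow> \<bar>f v - f 0 - s * v\<bar> \<le> A * v"
proof -
  have "continuous_on {0..b} (\<lambda>v. f' v - s)"
    by (intro continuous_intros f'_cont)
  then obtain A0 where A0: "0 \<le> A0" "\<And>v. v \<in> {0..b} \<Longrightarrow> norm (f' v - s) \<le> A0"
    by (rule continuous_on_compact_bound[OF compact_Icc]) blast
  define A where "A = A0 + 1"
  have h'_bound: "\<bar>f' v - s\<bar> \<le> A" if "0 \<le> v" "v \<le> b" for v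
    using A0(2)[of v] that by (simp add: A_def)
  define h where "h v = f v - f 0 - s * v" for v
  have h: "(h has_real_derivative f' v - s) (at v)" for v
    unfolding h_def by (auto intro!: derivative_eq_intros f)
  have "\<bar>h v\<bar> \<le> A * v" if "0 \<le> v" "v \<le> b" for v
  proof -
    have "norm (h v - h 0) \<le> A * norm (v - 0)"
      using h h'_bound that
      by (intro field_differentiable_bound[of "{0..b}" h "\<lambda>v. f' v - s"])
         (auto intro: has_field_derivative_at_within)
    then show ?thesis using that by (simp add: h_def)
  qed
  moreover have "0 < A" using A0(1) by (simp add: A_def)
  ultimately show ?thesis
    using h'_bound that unfolding h_def by blast
qed

lemma degenerate_viscous_profile_estimates:
  fixes f f' U U' U'' :: "real \<Rightarrow> real"
  assumes m: "0 < m" "m < 1" and mu: "0 < mu"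
    and f: "\<And>u. (f has_real_derivative f' u) (at u)" and f'_cont: "continuous_on {0..b} f'"
    and U: "\<And>x. (U has_real_derivative U' x) (at x)"
    and U': "\<And>x. (U' has_real_derivative U'' x) (at x)"
    and U_decr: "antimono U" and U_range: "\<And>x. 0 \<le> U x" "\<And>x. U x \<le> b"
    and reduced: "\<And>x. 0 < U x \<Longrightarrow>
      mu * (m * U x powr (m - 1) * U' x) = f (U x) - f 0 - s * U x"
  shows "\<exists>C>0. \<forall>x. \<bar>U' x\<bar> \<le> C * U x powr (2 - m)
                 \<and> \<bar>U'' x\<bar> \<le> C * U x powr (3 - 2 * m)"
proof -
  define h where "h v = f v - f 0 - s * v" for v
  obtain A where A: "0 < A"
    and h'_bound: "\<And>v. 0 \<le> v \<Longrightarrow> v \<le> b \<Longrightarrow> \<bar>f' v - s\<bar> \<le> A"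
    and h_bound: "\<And>v. 0 \<le> v \<Longrightarrow> v \<le> b \<Longrightarrow> \<bar>h v\<bar> \<le> A * v"
    using C1_deviation_from_line_bounds[OF f f'_cont] unfolding h_def by blast
  have h: "(h has_real_derivative f' v - s) (at v)" for v
    unfolding h_def by (auto intro!: derivative_eq_intros f)
  define k where "k = 1 / (m * mu)"
  have k: "0 < k" using m mu by (simp add: k_def)
  have eq: "U' y = k * (h (U y) * U y powr (1 - m))" if "0 < U y" for y
  proof -
    have "h (U y) = mu * m * U' y * U y powr (m - 1)"
      using reduced[OF that] by (simp add: h_def mult_ac)
    then have "h (U y) * U y powr (1 - m) = mu * m * U' y * (U y powr (m - 1) * U y powr (1 - m))"
      by (simp add: mult_ac)
    also have "U y powr (m - 1) * U y powr (1 - m) = 1"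
      using that by (simp add: powr_add[symmetric])
    finally show ?thesis
      using m mu by (simp add: k_def)
  qed
  define B where "B = k * A"
  have B: "0 < B" using k A by (simp add: B_def)
  have "\<bar>U' x\<bar> \<le> (B + 2 * B\<^sup>2) * U x powr (2 - m) \<and>
        \<bar>U'' x\<bar> \<le> (B + 2 * B\<^sup>2) * U x powr (3 - 2 * m)" for x
  proof (cases "U x = 0")
    case True
    then show ?thesis
      using antimono_nonneg_zero_derivatives[OF U_decr U_range(1) True U U'[of x]] by simp
  next
    case False
    then have "0 < U x" using U_range(1)[of x] by simp
    from autonomous_powr_estimates[OF less_imp_le[OF m(1)] less_imp_le[OF m(2)] k h
        h_bound[OF less_imp_le] h'_bound[OF less_imp_le] DERIV_isCont[OF U] U[of x] U'[of x]
        eq this U_range(2)]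
    have "\<bar>U' x\<bar> \<le> B * U x powr (2 - m)" "\<bar>U'' x\<bar> \<le> 2 * B\<^sup>2 * U x powr (3 - 2 * m)"
      unfolding B_def by auto
    moreover have "B * U x powr (2 - m) \<le> (B + 2 * B\<^sup>2) * U x powr (2 - m)"
      and "2 * B\<^sup>2 * U x powr (3 - 2 * m) \<le> (B + 2 * B\<^sup>2) * U x powr (3 - 2 * m)"
      using B by (auto intro!: mult_right_mono)
    ultimately show ?thesis by linarith
  qed
  moreover have "0 < B + 2 * B\<^sup>2" using B by (simp add: add_pos_nonneg)
  ultimately show ?thesis by blast
qed

theorem lemma5p1:
  fixes f U :: "real \<Rightarrow> real" and m mu um up s :: real
  assumes m: "0 < m" "m < 1"
    and mu: "mu > 0"
    and f_smooth: "smooth_fun f"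
    and states: "um > up" "up = 0"
    and s_def: "s = (f up - f um) / (up - um)"
    and lax: "deriv f up < s" "s < deriv f um"
    and U_decr: "antimono U"
    and U_diff: "\<And>x. U differentiable (at x)" "\<And>x. deriv U differentiable (at x)"
    and Um_diff: "\<And>x. (\<lambda>y. U y powr m) differentiable (at x)"
                 "\<And>x. deriv (\<lambda>y. U y powr m) differentiable (at x)"
    and ode: "\<And>x. - s * deriv U x + deriv (\<lambda>y. f (U y)) x
                     = mu * deriv (deriv (\<lambda>y. U y powr m)) x"
    and lim_minus: "(U \<longlongrightarrow> um) at_bot"
    and lim_plus: "(U \<longlongrightarrow> up) at_top"
  shows "\<exists>C>0. \<forall>\<xi>. \<bar>deriv U \<xi>\<bar> \<le> C * U \<xi> powr (2 - m)
                 \<and> \<bar>deriv (deriv U) \<xi>\<bar> \<le> C * U \<xi> powr (3 - 2 * m)"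
proof -
  define P where "P = (\<lambda>y. U y powr m)"
  note f = smooth_fun_imp_C1[OF f_smooth]
  have U: "(U has_real_derivative deriv U x) (at x)"
    and U': "(deriv U has_real_derivative deriv (deriv U) x) (at x)"
    and P: "(P has_real_derivative deriv P x) (at x)"
    and P': "(deriv P has_real_derivative deriv (deriv P) x) (at x)" for x
    using U_diff Um_diff by (simp_all add: P_def DERIV_deriv_iff_real_differentiable)
  have U_range: "0 \<le> U x" "U x \<le> um" for x
    using antimono_tendsto_at_top_le[OF U_decr lim_plus]
      antimono_le_tendsto_at_bot[OF U_decr lim_minus] states by auto
  have ode': "- s * deriv U x + deriv f (U x) * deriv U x = mu * deriv (deriv P) x" for x
    using ode[of x] DERIV_imp_deriv[OF DERIV_chain2[OF f(1) U]] by (simp add: P_def)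
  have U_lim: "(U \<longlongrightarrow> 0) at_top"
    using lim_plus states by simp
  have P_lim: "(P \<longlongrightarrow> 0) at_top"
    using U_lim U_range m unfolding P_def by (intro tendsto_zero_powrI[where b = m]) auto
  have first_integral: "mu * deriv P x = f (U x) - f 0 - s * U x" for x
    using viscous_profile_first_integral[OF f(1) U P P' ode' U_lim P_lim] by simp
  have reduced: "mu * (m * U x powr (m - 1) * deriv U x) = f (U x) - f 0 - s * U x"
    if "0 < U x" for x
    using first_integral[of x]
      DERIV_unique[OF P[unfolded P_def] DERIV_chain2[OF has_real_derivative_powr[OF that] U]]
    by (simp add: P_def)
  have "continuous_on {0..um} (deriv f)"
    by (intro continuous_at_imp_continuous_on ballI f(2))
  from degenerate_viscous_profile_estimates[OF m mu f(1) this U U' U_decr U_range reduced]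
  show ?thesis .
qed

end
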